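(* Let $n\ge2$, let $\mathcal{S}=\{\boldsymbol{\sigma}(\mathbf{t}):\mathbf{t}\in D\}$ be a rationally parameterisable hypersurface in $\mathbb{R}^n$ and let $O\subseteq D\setminus\sigma_1^{-1}(0)$ be open in $\mathbb{R}^{n-1}$. Suppose there is $\mathbf{t}\in O$ such that \[\det\left(\frac{\partial\overline{\boldsymbol{\sigma}}(\mathbf{t})}{\partial\mathbf{t}}\right)\neq0,\] where $\overline{\boldsymbol{\sigma}}=(\sigma_1,\dots,\sigma_{n-1})^T$, and such that for the point $\mathbf{s}=\boldsymbol{\sigma}(\mathbf{t})\in\mathcal{S}$ there is no neighborhood $U$ of $1$ in $\mathbb{R}$ with $\lambda\mathbf{s}\in\mathcal{S}$ for all $\lambda\in U$. Then $O$ satisfies the inner point condition.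
   Context: An rp-hypersurface is $\mathcal{S}=\{\boldsymbol{\sigma}(\mathbf{t}):\mathbf{t}\in D\}$ with $\boldsymbol{\sigma}=(\sigma_1,\dots,\sigma_n)^T$ having rational functions of $\mathbf{t}=(t_1,\dots,t_{n-1})$ as components and $D\subseteq\mathbb{R}^{n-1}$ a set where they are defined. $\frac{\partial\overline{\boldsymbol{\sigma}}(\mathbf{t})}{\partial\mathbf{t}}$ denotes the $(n-1)\times(n-1)$ Jacobian matrix of $\overline{\boldsymbol{\sigma}}$. $\hat{\boldsymbol{\sigma}}(\mathbf{t})=(\sigma_2(\mathbf{t})/\sigma_1(\mathbf{t}),\dots,\sigma_n(\mathbf{t})/\sigma_1(\mathbf{t}))^T$ for $\mathbf{t}\in D\setminus\sigma_1^{-1}(0)$. The inner point condition for $O$ means: there is $\mathbf{t}'\in O$ such that $\hat{\boldsymbol{\sigma}}(\mathbf{t}')$ is an interior point of $\hat{\boldsymbol{\sigma}}(O)=\{\hat{\boldsymbol{\sigma}}(\mathbf{u}):\mathbf{u}\in O\}$ in $\mathbb{R}^{n-1}$. *)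

theory Defs
  imports "HOL-Analysis.Analysis"
begin

inductive polyfun :: "(real^'m \<Rightarrow> real) \<Rightarrow> bool" where
  const: "polyfun (\<lambda>t. c)"
| coord: "polyfun (\<lambda>t. t $ i)"
| add: "polyfun p \<Longrightarrow> polyfun q \<Longrightarrow> polyfun (\<lambda>t. p t + q t)"
| mult: "polyfun p \<Longrightarrow> polyfun q \<Longrightarrow> polyfun (\<lambda>t. p t * q t)"

definition rational_on :: "(real^'m) set \<Rightarrow> (real^'m \<Rightarrow> real) \<Rightarrow> bool" where
  "rational_on D f \<longleftrightarrow> (\<exists>p q. polyfun p \<and> polyfun q \<and>
      (\<forall>t\<in>D. q t \<noteq> 0 \<and> f t = p t / q t))"

text \<open>Points of R^n are indexed by 'm option: None is coordinate 1, Some i are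
  coordinates 2..n (so n = CARD('m) + 1 \<ge> 2); parameters t range over R^(n-1) = real^'m.\<close>
definition rp_param :: "(real^'m \<Rightarrow> real^('m option)) \<Rightarrow> (real^'m) set \<Rightarrow> bool" where
  "rp_param \<sigma> D \<longleftrightarrow> (\<forall>k. rational_on D (\<lambda>t. \<sigma> t $ k))"

definition rp_surface :: "(real^'m \<Rightarrow> real^('m option)) \<Rightarrow> (real^'m) set \<Rightarrow> (real^('m option)) set" where
  "rp_surface \<sigma> D = \<sigma> ` D"

definition sigma_hat :: "(real^'m \<Rightarrow> real^('m option)) \<Rightarrow> real^'m \<Rightarrow> real^'m" where
  "sigma_hat \<sigma> t = (\<chi> i. \<sigma> t $ Some i / \<sigma> t $ None)"

text \<open>sigma-bar = (sigma_1, ..., sigma_{n-1}): the coordinate l is the one playing the role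
  of the last coordinate sigma_n; it is dropped and sigma_1 put in its slot (a permutation
  of the output coordinates, irrelevant for the nonvanishing of the Jacobian determinant).\<close>
definition sigma_bar :: "'m \<Rightarrow> (real^'m \<Rightarrow> real^('m option)) \<Rightarrow> real^'m \<Rightarrow> real^'m" where
  "sigma_bar l \<sigma> t = (\<chi> i. if i = l then \<sigma> t $ None else \<sigma> t $ Some i)"

definition inner_point_condition :: "(real^'m \<Rightarrow> real^('m option)) \<Rightarrow> (real^'m) set \<Rightarrow> bool" where
  "inner_point_condition \<sigma> V \<longleftrightarrow> (\<exists>t'\<in>V. sigma_hat \<sigma> t' \<in> interior (sigma_hat \<sigma> ` V))"

end

(*
  Suppose no point of sigma_hat(O) is interior. By the open mapping theorem the derivative of
  sigma_hat is then nowhere onto, hence singular, on O. Since sigma_hat divides by sigma_1, a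
  kernel vector v satisfies D sigma(x) v = mu sigma(x), so sigma(x) lies in the range of
  D sigma(x) wherever D sigma(x) is injective.
  Near t, sigma_bar is a local diffeomorphism; lifting the ray c |-> c sigma_bar(t) through it
  gives a curve tau with tau(1) = t, and injectivity of D sigma_bar along tau turns the above
  into the Euler equation sigma(tau c) = c (sigma o tau)'(c). Thus sigma(tau c) / c is
  constant, i.e. sigma(tau c) = c sigma(t) for all c near 1, contradicting the hypothesis.
*)
theory Submission
  imports Defs
begin

lemma has_derivative_vecI:
  fixes f :: "'a::real_normed_vector \<Rightarrow> real^'n"
  assumes "\<And>k. ((\<lambda>x. f x $ k) has_derivative (\<lambda>h. f' h $ k)) (at x)"
  shows "(f has_derivative f') (at x)"
  using assms
  by (intro has_derivative_componentwise_within[THEN iffD2]) (auto simp: Basis_vec_def inner_axis)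

lemma has_vector_derivative_comp_has_derivative:
  assumes "(\<tau> has_vector_derivative v) (at c)" "(f has_derivative f') (at (\<tau> c))"
  shows "((f \<circ> \<tau>) has_vector_derivative f' v) (at c)"
proof -
  have "((f \<circ> \<tau>) has_derivative (f' \<circ> (\<lambda>x. x *\<^sub>R v))) (at c)"
    using diff_chain_at assms unfolding has_vector_derivative_def by blast
  moreover have "linear f'"
    using assms(2) has_derivative_linear by blast
  ultimately show ?thesis
    unfolding has_vector_derivative_def by (simp add: o_def linear_cmul)
qed

lemma interior_image_if_surj_derivative:
  fixes f :: "'a::euclidean_space \<Rightarrow> 'b::euclidean_space"
  assumes V: "open V" and x: "x \<in> V"
    and der: "\<And>y. y \<in> V \<Longrightarrow> (f has_derivative f' y) (at y)"
    and surj: "surj (f' x)"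
  shows "f x \<in> interior (f ` V)"
proof -
  have "linear (f' x)"
    using der[OF x] has_derivative_linear by blast
  then obtain g where g: "linear g" "f' x \<circ> g = id"
    using linear_surjective_right_inverse surj by blast
  have cont: "continuous_on V f"
    using der by (meson continuous_at_imp_continuous_on has_derivative_continuous)
  have "bounded_linear g"
    using g(1) linear_conv_bounded_linear by blast
  moreover have "x \<in> interior V"
    using V x by (simp add: interior_open)
  ultimately show ?thesis
    by (rule sussmann_open_mapping[OF V cont x der[OF x] _ g(2) subset_refl])
qed

lemma inj_derivative_if_det_jacobian_nonzero:
  fixes f :: "real^'n \<Rightarrow> real^'n"
  assumes "(f has_derivative f') (at x)" "det (jacobian f (at x)) \<noteq> 0"
  shows "inj f'"
  using assms det_nz_iff_inj[OF has_derivative_linear[OF assms(1)]]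
  by (simp add: jacobian_def flip: frechet_derivative_at[OF assms(1)])

lemma eq_scaleR_if_euler_equation:
  fixes \<phi> :: "real \<Rightarrow> 'a::real_normed_vector"
  assumes "r \<le> 1"
    and der: "\<And>c. c \<in> ball 1 r \<Longrightarrow> (\<phi> has_vector_derivative \<phi>' c) (at c)"
    and euler: "\<And>c. c \<in> ball 1 r \<Longrightarrow> \<phi> c = c *\<^sub>R \<phi>' c"
    and c: "c \<in> ball 1 r"
  shows "\<phi> c = c *\<^sub>R \<phi> 1"
proof -
  have pos: "b > 0" if "b \<in> ball 1 r" for b :: real
    using that \<open>r \<le> 1\<close> by (simp add: dist_real_def)
  have "((\<lambda>b. inverse b *\<^sub>R \<phi> b) has_derivative (\<lambda>_. 0)) (at b within ball 1 r)"
    if b: "b \<in> ball 1 r" for b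
  proof -
    have "((\<lambda>b. inverse b *\<^sub>R \<phi> b) has_derivative
            (\<lambda>h. inverse b *\<^sub>R (h *\<^sub>R \<phi>' b) + (- (inverse b * h * inverse b)) *\<^sub>R \<phi> b)) (at b)"
      using pos[OF b] der[OF b]
      by (intro has_derivative_scaleR has_derivative_inverse') (simp_all add: has_vector_derivative_def)
    then show ?thesis
      by (rule has_derivative_at_withinI[OF has_derivative_eq_rhs])
         (use pos[OF b] euler[OF b] in \<open>auto simp: fun_eq_iff algebra_simps\<close>)
  qed
  then have "\<exists>C. \<forall>b\<in>ball 1 r. inverse b *\<^sub>R \<phi> b = C"
    by (rule has_derivative_zero_constant[OF convex_ball])
  then obtain C where C: "\<And>b. b \<in> ball 1 r \<Longrightarrow> inverse b *\<^sub>R \<phi> b = C"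
    by blast
  have "1 \<in> ball 1 r"
    using c by (simp add: dist_real_def)
  then have "inverse c *\<^sub>R \<phi> c = \<phi> 1"
    using C[OF c] C by fastforce
  moreover have "\<phi> c = c *\<^sub>R (inverse c *\<^sub>R \<phi> c)"
    using pos[OF c] by simp
  ultimately show ?thesis
    by simp
qed

lemma continuous_on_Blinfun:
  fixes F' :: "'a::t2_space \<Rightarrow> 'b::euclidean_space \<Rightarrow> 'c::real_normed_vector"
  assumes "\<And>x. x \<in> V \<Longrightarrow> bounded_linear (F' x)" "\<And>h. continuous_on V (\<lambda>x. F' x h)"
  shows "continuous_on V (\<lambda>x. Blinfun (F' x))"
proof (rule continuous_on_blinfun_componentwise)
  fix h :: 'b
  show "continuous_on V (\<lambda>x. blinfun_apply (Blinfun (F' x)) h)"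
    using assms(2) by (rule continuous_on_eq) (simp add: assms(1) bounded_linear_Blinfun_apply)
qed

lemma ray_lifts_through_local_inverse:
  fixes F :: "'a::euclidean_space \<Rightarrow> 'a"
  assumes V: "open V" and t: "t \<in> V"
    and der: "\<And>x. x \<in> V \<Longrightarrow> (F has_derivative F' x) (at x)"
    and cont: "\<And>h. continuous_on V (\<lambda>x. F' x h)"
    and inj: "inj (F' t)"
  obtains r \<tau> where "r > 0" "\<tau> 1 = t"
    "\<And>c. c \<in> ball 1 r \<Longrightarrow>
       \<tau> c \<in> V \<and> F (\<tau> c) = c *\<^sub>R F t \<and> inj (F' (\<tau> c)) \<and> \<tau> differentiable (at c)"
proof -
  have bl: "bounded_linear (F' x)" if "x \<in> V" for x
    using der[OF that] has_derivative_bounded_linear by blast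
  then have F'_eq: "blinfun_apply (Blinfun (F' x)) = F' x" if "x \<in> V" for x
    using that by (simp add: bounded_linear_Blinfun_apply)
  obtain g0 where g0: "linear g0" "g0 \<circ> F' t = id"
    using linear_injective_left_inverse[OF bounded_linear.linear[OF bl[OF t]] inj] by blast
  have "Blinfun g0 o\<^sub>L Blinfun (F' t) = id_blinfun"
    using g0 F'_eq[OF t]
    by (intro blinfun_eqI) (simp add: bounded_linear_Blinfun_apply fun_eq_iff flip: linear_conv_bounded_linear)
  then obtain U W g g' where U: "open U" "U \<subseteq> V" "t \<in> U" and W: "open W" "F t \<in> W"
    and hom: "homeomorphism U W F g"
    and g': "\<And>y. y \<in> W \<Longrightarrow> (g has_derivative g' y) (at y)"
    and bij: "\<And>y. y \<in> W \<Longrightarrow> bij (blinfun_apply (Blinfun (F' (g y))))"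
    using inverse_function_theorem[OF V _ continuous_on_Blinfun[OF bl cont] t] der F'_eq by metis
  have "open ((\<lambda>c. c *\<^sub>R F t) -` W)"
    using W(1) by (rule continuous_open_vimage) (intro continuous_intros)
  moreover have "1 \<in> (\<lambda>c. c *\<^sub>R F t) -` W"
    using W(2) by simp
  ultimately obtain r where r: "r > 0" "ball 1 r \<subseteq> (\<lambda>c. c *\<^sub>R F t) -` W"
    unfolding open_contains_ball by blast
  show thesis
  proof (rule that[of r "\<lambda>c. g (c *\<^sub>R F t)", OF r(1)])
    show "g (1 *\<^sub>R F t) = t"
      using homeomorphism_apply1[OF hom U(3)] by simp
    fix c :: real
    assume "c \<in> ball 1 r"
    then have cW: "c *\<^sub>R F t \<in> W"
      using r(2) by blast
    have "g differentiable (at (c *\<^sub>R F t))"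
      using g'[OF cW] differentiable_def by blast
    then have "(g \<circ> (\<lambda>c. c *\<^sub>R F t)) differentiable (at c)"
      by (intro differentiable_chain_at)
         (simp_all add: bounded_linear_imp_differentiable bounded_linear_scaleR_left)
    moreover have gV: "g (c *\<^sub>R F t) \<in> V"
      using homeomorphism_image2[OF hom] cW U(2) by blast
    moreover have "F (g (c *\<^sub>R F t)) = c *\<^sub>R F t"
      by (rule homeomorphism_apply2[OF hom cW])
    moreover have "inj (F' (g (c *\<^sub>R F t)))"
      using bij_is_inj[OF bij[OF cW]] F'_eq[OF gV] by simp
    ultimately show "g (c *\<^sub>R F t) \<in> V \<and> F (g (c *\<^sub>R F t)) = c *\<^sub>R F t \<and>
        inj (F' (g (c *\<^sub>R F t))) \<and> (\<lambda>c. g (c *\<^sub>R F t)) differentiable (at c)"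
      by (simp add: o_def)
  qed
qed

lemma euler_identity_along_lifted_ray:
  fixes f :: "'a::real_normed_vector \<Rightarrow> 'b::euclidean_space" and P :: "'b \<Rightarrow> 'c::real_normed_vector"
  assumes P: "linear P"
    and f': "(f has_derivative f') (at (\<tau> c))"
    and \<tau>': "(\<tau> has_vector_derivative v) (at c)"
    and J: "open J" "c \<in> J" "\<And>b. b \<in> J \<Longrightarrow> P (f (\<tau> b)) = b *\<^sub>R a"
    and inj: "inj (P \<circ> f')"
    and range: "f (\<tau> c) \<in> range f'"
  shows "f (\<tau> c) = c *\<^sub>R f' v"
proof -
  have lin: "linear f'"
    using f' has_derivative_linear by blast
  have "((\<lambda>b. P (f (\<tau> b))) has_vector_derivative P (f' v)) (at c)"
    using bounded_linear.has_vector_derivative[OF _ has_vector_derivative_comp_has_derivative[OF \<tau>' f']] P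
    by (simp add: o_def linear_conv_bounded_linear)
  moreover have "((\<lambda>b. P (f (\<tau> b))) has_vector_derivative a) (at c)"
    by (rule has_vector_derivative_transform_within_open[OF _ J(1,2)])
       (auto intro!: derivative_eq_intros simp: J(3))
  ultimately have Pv: "P (f' v) = a"
    using vector_derivative_unique_at by blast
  obtain u where u: "f' u = f (\<tau> c)"
    using range by (metis rangeE)
  have "(P \<circ> f') u = (P \<circ> f') (c *\<^sub>R v)"
    using u Pv J(2,3) P lin by (simp add: linear_cmul)
  then have "u = c *\<^sub>R v"
    by (rule injD[OF inj])
  then show ?thesis
    using u lin by (simp add: linear_cmul)
qed

lemma scaled_point_in_image:
  fixes f :: "'a::euclidean_space \<Rightarrow> 'b::euclidean_space" and P :: "'b \<Rightarrow> 'a"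
  assumes V: "open V" and t: "t \<in> V" and P: "linear P"
    and der: "\<And>x. x \<in> V \<Longrightarrow> (f has_derivative f' x) (at x)"
    and cont: "\<And>h. continuous_on V (\<lambda>x. f' x h)"
    and inj_t: "inj (P \<circ> f' t)"
    and radial: "\<And>x. x \<in> V \<Longrightarrow> inj (f' x) \<Longrightarrow> f x \<in> range (f' x)"
  shows "\<exists>r>0. \<forall>c\<in>ball 1 r. c *\<^sub>R f t \<in> f ` V"
proof -
  have der_Pf: "((P \<circ> f) has_derivative P \<circ> f' x) (at x)" if "x \<in> V" for x
    by (rule diff_chain_at[OF der[OF that] linear_imp_has_derivative[OF P]])
  have cont_Pf': "continuous_on V (\<lambda>x. (P \<circ> f' x) h)" for h
    unfolding o_def by (rule linear_continuous_on_compose[OF cont P])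
  obtain r \<tau> where r: "r > 0" and \<tau>1: "\<tau> 1 = t" and \<tau>:
    "\<And>c. c \<in> ball 1 r \<Longrightarrow> \<tau> c \<in> V \<and> (P \<circ> f) (\<tau> c) = c *\<^sub>R (P \<circ> f) t \<and>
       inj (P \<circ> f' (\<tau> c)) \<and> \<tau> differentiable (at c)"
    using ray_lifts_through_local_inverse[OF V t der_Pf cont_Pf' inj_t] by blast
  define \<rho> where "\<rho> = min r 1"
  have in_ball: "c \<in> ball 1 r" if "c \<in> ball 1 \<rho>" for c
    using that by (simp add: \<rho>_def)
  have \<tau>': "(\<tau> has_vector_derivative vector_derivative \<tau> (at c)) (at c)" if "c \<in> ball 1 \<rho>" for c
    using \<tau>[OF in_ball[OF that]] vector_derivative_works by blast
  have "(f \<circ> \<tau>) c = c *\<^sub>R (f \<circ> \<tau>) 1" if c: "c \<in> ball 1 \<rho>" for c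
  proof (rule eq_scaleR_if_euler_equation[OF _ _ _ c])
    show "\<rho> \<le> 1" by (simp add: \<rho>_def)
    fix b :: real assume b: "b \<in> ball 1 \<rho>"
    show "((f \<circ> \<tau>) has_vector_derivative f' (\<tau> b) (vector_derivative \<tau> (at b))) (at b)"
      using has_vector_derivative_comp_has_derivative[OF \<tau>'[OF b] der] \<tau>[OF in_ball[OF b]] by blast
    have \<tau>b: "\<tau> b \<in> V"
      using \<tau>[OF in_ball[OF b]] by blast
    have ray: "\<And>b'. b' \<in> ball 1 r \<Longrightarrow> P (f (\<tau> b')) = b' *\<^sub>R P (f t)"
      using \<tau> by simp
    have inj_b: "inj (P \<circ> f' (\<tau> b))"
      using \<tau>[OF in_ball[OF b]] by blast
    then have "f (\<tau> b) \<in> range (f' (\<tau> b))"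
      using radial[OF \<tau>b] inj_on_imageI2 by blast
    then show "(f \<circ> \<tau>) b = b *\<^sub>R f' (\<tau> b) (vector_derivative \<tau> (at b))"
      using euler_identity_along_lifted_ray[OF P der[OF \<tau>b] \<tau>'[OF b] open_ball in_ball[OF b] ray inj_b]
      by simp
  qed
  then have "c *\<^sub>R f t \<in> f ` V" if "c \<in> ball 1 \<rho>" for c
    using that \<tau>[OF in_ball[OF that]] \<tau>1 by (metis comp_apply image_eqI)
  moreover have "\<rho> > 0"
    using r by (simp add: \<rho>_def)
  ultimately show ?thesis
    by blast
qed

lemma polyfun_has_continuous_gradient:
  fixes p :: "real^'m \<Rightarrow> real"
  assumes "polyfun p"
  shows "\<exists>g. continuous_on UNIV g \<and> (\<forall>t. (p has_derivative (\<lambda>h. g t \<bullet> h)) (at t))"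
  using assms
proof induction
  case (const c)
  show ?case by (rule exI[of _ "\<lambda>t. 0"]) auto
next
  case (coord i)
  have "((\<lambda>t. t $ i) has_derivative (\<lambda>h. axis i 1 \<bullet> h)) (at t)" for t :: "real^'m"
    by (simp add: inner_axis' bounded_linear_imp_has_derivative bounded_linear_vec_nth)
  then show ?case
    by (intro exI[of _ "\<lambda>t. axis i 1"]) simp
next
  case (add p q)
  then obtain gp gq where "continuous_on UNIV gp" "\<forall>t. (p has_derivative (\<lambda>h. gp t \<bullet> h)) (at t)"
    "continuous_on UNIV gq" "\<forall>t. (q has_derivative (\<lambda>h. gq t \<bullet> h)) (at t)" by blast
  then show ?case
    by (intro exI[of _ "\<lambda>t. gp t + gq t"])
       (auto intro!: continuous_intros derivative_eq_intros simp: inner_add_left)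
next
  case (mult p q)
  then obtain gp gq where gp: "continuous_on UNIV gp" "\<And>t. (p has_derivative (\<lambda>h. gp t \<bullet> h)) (at t)"
    and gq: "continuous_on UNIV gq" "\<And>t. (q has_derivative (\<lambda>h. gq t \<bullet> h)) (at t)" by blast
  have "continuous_on UNIV p" "continuous_on UNIV q"
    using gp(2) gq(2) by (meson continuous_at_imp_continuous_on has_derivative_continuous)+
  then have "continuous_on UNIV (\<lambda>t. q t *\<^sub>R gp t + p t *\<^sub>R gq t)"
    by (intro continuous_intros gp(1) gq(1))
  moreover have "((\<lambda>t. p t * q t) has_derivative (\<lambda>h. (q t *\<^sub>R gp t + p t *\<^sub>R gq t) \<bullet> h)) (at t)" for t
    by (rule has_derivative_eq_rhs[OF has_derivative_mult[OF gp(2) gq(2)]])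
       (auto simp: inner_add_left algebra_simps)
  ultimately show ?case by blast
qed

lemma rational_on_has_continuous_gradient:
  fixes f :: "real^'m \<Rightarrow> real"
  assumes "rational_on D f" "open V" "V \<subseteq> D"
  shows "\<exists>g. continuous_on V g \<and> (\<forall>t\<in>V. (f has_derivative (\<lambda>h. g t \<bullet> h)) (at t))"
proof -
  obtain p q where pq: "polyfun p" "polyfun q" "\<forall>t\<in>D. q t \<noteq> 0 \<and> f t = p t / q t"
    using assms(1) unfolding rational_on_def by blast
  obtain gp where gp: "continuous_on UNIV gp" "\<And>t. (p has_derivative (\<lambda>h. gp t \<bullet> h)) (at t)"
    using polyfun_has_continuous_gradient[OF pq(1)] by blast
  obtain gq where gq: "continuous_on UNIV gq" "\<And>t. (q has_derivative (\<lambda>h. gq t \<bullet> h)) (at t)"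
    using polyfun_has_continuous_gradient[OF pq(2)] by blast
  have "continuous_on V p" "continuous_on V q"
    using gp(2) gq(2) by (meson continuous_at_imp_continuous_on has_derivative_continuous)+
  have q: "q t \<noteq> 0" if "t \<in> V" for t
    using pq(3) assms(3) that by blast
  define g where "g t = inverse ((q t)\<^sup>2) *\<^sub>R (q t *\<^sub>R gp t - p t *\<^sub>R gq t)" for t
  have "continuous_on V g"
    unfolding g_def
    by (intro continuous_intros \<open>continuous_on V p\<close> \<open>continuous_on V q\<close>
        continuous_on_subset[OF gp(1)] continuous_on_subset[OF gq(1)]) (auto simp: q)
  moreover have "(f has_derivative (\<lambda>h. g t \<bullet> h)) (at t)" if t: "t \<in> V" for t
  proof -
    have "((\<lambda>t. p t / q t) has_derivative (\<lambda>h. g t \<bullet> h)) (at t)"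
      by (rule has_derivative_eq_rhs[OF has_derivative_divide[OF gp(2) gq(2) q[OF t]]])
         (use q[OF t] in \<open>simp add: g_def fun_eq_iff inner_diff_left field_simps power2_eq_square\<close>)
    then show ?thesis
      by (rule has_derivative_transform_within_open[OF _ assms(2) t]) (use pq(3) assms(3) in auto)
  qed
  ultimately show ?thesis by blast
qed

lemma rp_param_has_continuous_derivative:
  fixes \<sigma> :: "real^'m \<Rightarrow> real^('m option)"
  assumes "rp_param \<sigma> D" "open V" "V \<subseteq> D"
  obtains \<sigma>' where "\<And>x. x \<in> V \<Longrightarrow> (\<sigma> has_derivative \<sigma>' x) (at x)"
    and "\<And>h. continuous_on V (\<lambda>x. \<sigma>' x h)"
proof -
  have "\<forall>k. \<exists>g. continuous_on V g \<and> (\<forall>x\<in>V. ((\<lambda>s. \<sigma> s $ k) has_derivative (\<lambda>h. g x \<bullet> h)) (at x))"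
    using assms rational_on_has_continuous_gradient unfolding rp_param_def by blast
  then obtain d where d: "\<And>k. continuous_on V (d k)"
    "\<And>k x. x \<in> V \<Longrightarrow> ((\<lambda>s. \<sigma> s $ k) has_derivative (\<lambda>h. d k x \<bullet> h)) (at x)"
    by metis
  show thesis
  proof (rule that[of "\<lambda>x h. \<chi> k. d k x \<bullet> h"])
    show "(\<sigma> has_derivative (\<lambda>h. \<chi> k. d k x \<bullet> h)) (at x)" if "x \<in> V" for x
      by (rule has_derivative_vecI) (simp add: d(2)[OF that])
    show "continuous_on V (\<lambda>x. \<chi> k. d k x \<bullet> h)" for h
      by (intro continuous_on_vec_lambda continuous_intros d(1))
  qed
qed

definition dehomogenize :: "real^('m option) \<Rightarrow> real^'m" where
  "dehomogenize z = (\<chi> i. z $ Some i / z $ None)"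

definition dehomogenize_deriv :: "real^('m option) \<Rightarrow> real^('m option) \<Rightarrow> real^'m" where
  "dehomogenize_deriv z h =
     (\<chi> i. (z $ None * h $ Some i - z $ Some i * h $ None) / (z $ None)\<^sup>2)"

lemma sigma_hat_eq_dehomogenize: "sigma_hat \<sigma> = dehomogenize \<circ> \<sigma>"
  by (simp add: fun_eq_iff sigma_hat_def dehomogenize_def)

lemma linear_dehomogenize_deriv: "linear (dehomogenize_deriv z)"
  by (rule linearI)
    (simp_all add: dehomogenize_deriv_def vec_eq_iff algebra_simps add_divide_distrib diff_divide_distrib)

lemma has_derivative_dehomogenize:
  assumes "z $ None \<noteq> 0"
  shows "(dehomogenize has_derivative dehomogenize_deriv z) (at z)"
  unfolding dehomogenize_def
  by (rule has_derivative_vecI)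
     (use assms in \<open>auto intro!: derivative_eq_intros bounded_linear_imp_has_derivative
       simp: dehomogenize_deriv_def field_simps power2_eq_square\<close>)

lemma dehomogenize_deriv_kernel:
  assumes "z $ None \<noteq> 0" "dehomogenize_deriv z h = 0"
  shows "h = (h $ None / z $ None) *\<^sub>R z"
proof (subst vec_eq_iff, intro allI)
  fix k show "h $ k = ((h $ None / z $ None) *\<^sub>R z) $ k"
  proof (cases k)
    case (Some i)
    have "dehomogenize_deriv z h $ i = 0" using assms(2) by simp
    with Some assms(1) show ?thesis by (simp add: dehomogenize_deriv_def field_simps)
  qed (use assms(1) in simp)
qed

lemma in_range_if_not_surj_dehomogenize_deriv:
  fixes L :: "real^'m \<Rightarrow> real^('m option)"
  assumes L: "linear L" "inj L" and z: "z $ None \<noteq> 0"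
    and not_surj: "\<not> surj (dehomogenize_deriv z \<circ> L)"
  shows "z \<in> range L"
proof -
  have lin: "linear (dehomogenize_deriv z \<circ> L)"
    using linear_compose[OF L(1) linear_dehomogenize_deriv] .
  then have "\<not> inj (dehomogenize_deriv z \<circ> L)"
    using not_surj linear_injective_imp_surjective by blast
  then obtain v where v: "dehomogenize_deriv z (L v) = 0" "v \<noteq> 0"
    using linear_injective_0[OF lin] by auto
  define \<mu> where "\<mu> = L v $ None / z $ None"
  have Lv: "L v = \<mu> *\<^sub>R z"
    unfolding \<mu>_def using dehomogenize_deriv_kernel[OF z v(1)] .
  have "\<mu> \<noteq> 0"
    using Lv v(2) L by (metis linear_injective_0 scale_zero_left)
  then have "L (inverse \<mu> *\<^sub>R v) = z"
    using Lv linear_cmul[OF L(1)] by simp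
  then show ?thesis by (metis rangeI)
qed

lemma in_range_derivative_if_sigma_hat_not_interior:
  fixes \<sigma> :: "real^'m \<Rightarrow> real^('m option)"
  assumes V: "open V" and x: "x \<in> V"
    and der: "\<And>y. y \<in> V \<Longrightarrow> (\<sigma> has_derivative \<sigma>' y) (at y)"
    and \<sigma>1: "\<And>y. y \<in> V \<Longrightarrow> \<sigma> y $ None \<noteq> 0"
    and inj: "inj (\<sigma>' x)"
    and not_interior: "sigma_hat \<sigma> x \<notin> interior (sigma_hat \<sigma> ` V)"
  shows "\<sigma> x \<in> range (\<sigma>' x)"
proof (rule in_range_if_not_surj_dehomogenize_deriv[OF _ inj \<sigma>1[OF x]])
  show "linear (\<sigma>' x)"
    using der[OF x] has_derivative_linear by blast
  have der_hat: "(sigma_hat \<sigma> has_derivative dehomogenize_deriv (\<sigma> y) \<circ> \<sigma>' y) (at y)"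
    if "y \<in> V" for y
    unfolding sigma_hat_eq_dehomogenize
    by (rule diff_chain_at[OF der[OF that] has_derivative_dehomogenize[OF \<sigma>1[OF that]]])
  show "\<not> surj (dehomogenize_deriv (\<sigma> x) \<circ> \<sigma>' x)"
    using interior_image_if_surj_derivative[OF V x der_hat] not_interior by blast
qed

definition bar_coords :: "'m \<Rightarrow> real^('m option) \<Rightarrow> real^'m" where
  "bar_coords l z = (\<chi> i. if i = l then z $ None else z $ Some i)"

lemma sigma_bar_eq_bar_coords: "sigma_bar l \<sigma> = bar_coords l \<circ> \<sigma>"
  by (simp add: fun_eq_iff sigma_bar_def bar_coords_def)

lemma linear_bar_coords: "linear (bar_coords l)"
  by (rule linearI) (simp_all add: bar_coords_def vec_eq_iff)

theorem theorem6:
  fixes \<sigma> :: "real^'m \<Rightarrow> real^('m option)"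
    and D V :: "(real^'m) set"
    and l :: 'm
  assumes rp: "rp_param \<sigma> D"
    and O_open: "open V"
    and O_sub: "V \<subseteq> D - {t. \<sigma> t $ None = 0}"
    and t_in: "t \<in> V"
    and jac: "det (jacobian (sigma_bar l \<sigma>) (at t)) \<noteq> 0"
    and no_nbhd: "\<not> (\<exists>U. open U \<and> (1::real) \<in> U \<and>
                        (\<forall>c\<in>U. c *\<^sub>R \<sigma> t \<in> rp_surface \<sigma> D))"
  shows "inner_point_condition \<sigma> V"
proof (rule ccontr)
  assume no_inner_point: "\<not> inner_point_condition \<sigma> V"
  have VD: "V \<subseteq> D" and \<sigma>1: "\<And>x. x \<in> V \<Longrightarrow> \<sigma> x $ None \<noteq> 0"
    using O_sub by auto
  obtain \<sigma>' where der: "\<And>x. x \<in> V \<Longrightarrow> (\<sigma> has_derivative \<sigma>' x) (at x)"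
    and cont: "\<And>h. continuous_on V (\<lambda>x. \<sigma>' x h)"
    using rp_param_has_continuous_derivative[OF rp O_open VD] by blast
  have "\<sigma> x \<in> range (\<sigma>' x)" if "x \<in> V" "inj (\<sigma>' x)" for x
    using in_range_derivative_if_sigma_hat_not_interior[OF O_open that(1) der \<sigma>1 that(2)]
      no_inner_point that(1)
    unfolding inner_point_condition_def by blast
  moreover have "inj (bar_coords l \<circ> \<sigma>' t)"
    using jac diff_chain_at[OF der[OF t_in] linear_imp_has_derivative[OF linear_bar_coords]]
    by (intro inj_derivative_if_det_jacobian_nonzero) (simp_all add: sigma_bar_eq_bar_coords)
  ultimately obtain r where "r > 0" "\<forall>c\<in>ball 1 r. c *\<^sub>R \<sigma> t \<in> \<sigma> ` V"
    using scaled_point_in_image[OF O_open t_in linear_bar_coords der cont] by blast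
  then show False
    using no_nbhd VD unfolding rp_surface_def by (meson centre_in_ball image_mono open_ball subsetD)
qed

end
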